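(* Let $f$ be holomorphic on the open unit disc $D_O(1)=\{z=y_1+iy_2\in\mathbb C:|z|<1\}$ with $\int_{D_O(1)}|f(z)|^2\,dy_1\,dy_2<\infty$. Then $$\int_{D_O(1)}(1-|z|)^2|f'(z)|^2\,dy_1\,dy_2\le\frac12\int_{D_O(1)}|f(z)|^2\,dy_1\,dy_2.$$ *)

theory Defs
  imports "HOL-Analysis.Analysis"
begin

end

(*
  Write f(z) = sum a_n z^n.  For every radial weight w the monomials z^n are orthogonal in
  L^2(w(|z|) dz) on the disc D: the rotation z -> e^(i t) z preserves Lebesgue measure and
  multiplies z^n conj(z)^m by e^(i (n - m) t).  With the moments computed in polar coordinates,
    int_D |f|^2 = sum |a_n|^2 pi / (n + 1),
    int_D (1 - |z|)^2 |f'|^2 = sum (n + 1)^2 |a_(n+1)|^2 pi / ((n + 1) (2n + 3) (n + 2)),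
  and the bound follows termwise from (n + 1) / (2n + 3) <= 1/2.  The expansions are first
  obtained on smaller discs, where the partial sums are uniformly bounded (dominated
  convergence), and then on D by monotone convergence.
*)

theory Submission
  imports Defs "HOL-Complex_Analysis.Cauchy_Integral_Formula"
begin

lemma lborel_pair_distr_shear_fst:
  fixes h :: "real \<Rightarrow> real"
  assumes [measurable]: "h \<in> borel_measurable borel"
  shows "distr lborel borel (\<lambda>(x, y). (x + h y, y)) = (lborel :: (real \<times> real) measure)"
proof (rule measure_eqI)
  fix A :: "(real \<times> real) set"
  assume "A \<in> sets (distr lborel borel (\<lambda>(x, y). (x + h y, y)))"
  then have [measurable]: "A \<in> sets borel" by simp
  have [measurable]: "(\<lambda>(x, y). (x + h y, y)) \<in> borel_measurable (borel :: (real \<times> real) measure)"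
    unfolding borel_prod[symmetric] by measurable
  have "emeasure (distr lborel borel (\<lambda>(x, y). (x + h y, y))) A
      = (\<integral>\<^sup>+ p. indicator A (fst p + h (snd p), snd p) \<partial>(lborel \<Otimes>\<^sub>M lborel))"
    by (simp flip: nn_integral_indicator add: nn_integral_distr lborel_prod case_prod_beta)
  also have "\<dots> = (\<integral>\<^sup>+ y. \<integral>\<^sup>+ x. indicator A (x + h y, y) \<partial>lborel \<partial>lborel)"
    by (subst lborel_pair.nn_integral_snd[symmetric]) (auto simp: borel_prod)
  also have "\<dots> = (\<integral>\<^sup>+ y. \<integral>\<^sup>+ x. indicator A (x, y) \<partial>lborel \<partial>lborel)"
  proof (rule nn_integral_cong)
    fix y
    show "(\<integral>\<^sup>+ x. indicator A (x + h y, y) \<partial>lborel) = (\<integral>\<^sup>+ x. indicator A (x, y) \<partial>lborel)"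
      using nn_integral_real_affine[of "\<lambda>x. indicator A (x, y)" 1 "h y"] by (simp add: add.commute)
  qed
  also have "\<dots> = (\<integral>\<^sup>+ p. indicator A p \<partial>(lborel \<Otimes>\<^sub>M lborel))"
    by (subst lborel_pair.nn_integral_snd[symmetric]) (auto simp: lborel_prod)
  also have "\<dots> = emeasure lborel A"
    by (simp add: lborel_prod)
  finally show "emeasure (distr lborel borel (\<lambda>(x, y). (x + h y, y))) A = emeasure lborel A" .
qed simp

lemma lborel_pair_distr_swap:
  "distr lborel borel (\<lambda>(x, y). (y, x)) = (lborel :: (real \<times> real) measure)"
proof -
  have "distr lborel borel (\<lambda>(x, y). (y, x)) = distr lborel lborel (\<lambda>(x :: real, y :: real). (y, x))"
    by (rule distr_cong) simp_all
  then show ?thesis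
    using lborel_pair.distr_pair_swap[symmetric] by (simp add: lborel_prod)
qed

lemma lborel_pair_distr_shear_snd:
  fixes h :: "real \<Rightarrow> real"
  assumes [measurable]: "h \<in> borel_measurable borel"
  shows "distr lborel borel (\<lambda>(x, y). (x, y + h x)) = (lborel :: (real \<times> real) measure)"
proof -
  let ?swap = "\<lambda>(x :: real, y :: real). (y, x)"
  have swap: "?swap \<in> lborel \<rightarrow>\<^sub>M borel" "?swap \<in> borel \<rightarrow>\<^sub>M borel"
    using measurable_pair_swap'[of "borel :: real measure" "borel :: real measure"] by (simp_all add: borel_prod)
  have shear: "(\<lambda>(x, y). (x + h y, y)) \<in> borel_measurable (borel :: (real \<times> real) measure)"
    unfolding borel_prod[symmetric] by measurable
  have "distr (distr (distr lborel borel ?swap) borel (\<lambda>(x, y). (x + h y, y))) borel ?swap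
      = distr lborel borel (?swap \<circ> ((\<lambda>(x, y). (x + h y, y)) \<circ> ?swap))"
    by (simp only: distr_distr[OF shear swap(1)] distr_distr[OF swap(2)] measurable_comp[OF swap(1) shear])
  also have "?swap \<circ> ((\<lambda>(x, y). (x + h y, y)) \<circ> ?swap) = (\<lambda>(x, y). (x, y + h x))"
    by (simp add: fun_eq_iff)
  finally show ?thesis
    by (simp add: lborel_pair_distr_swap lborel_pair_distr_shear_fst)
qed

lemma lborel_complex_eq_distr_Complex:
  "(lborel :: complex measure) = distr lborel borel (\<lambda>(x, y). Complex x y)"
proof (rule lborel_eqI)
  fix l u :: complex
  assume le: "\<And>b. b \<in> Basis \<Longrightarrow> l \<bullet> b \<le> u \<bullet> b"
  have [measurable]: "(\<lambda>(x, y). Complex x y) \<in> borel_measurable borel"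
    by (simp add: borel_measurable_complex_iff borel_prod[symmetric] case_prod_beta)
  have "(\<lambda>(x, y). Complex x y) -` box l u = box (Re l, Im l) (Re u, Im u)"
    by (auto simp: box_def Basis_complex_def Basis_prod_def inner_complex_def inner_prod_def)
  then have "emeasure (distr lborel borel (\<lambda>(x, y). Complex x y)) (box l u)
      = emeasure lborel (box (Re l, Im l) (Re u, Im u))"
    by (subst emeasure_distr) auto
  also have "\<dots> = ennreal ((Re u - Re l) * (Im u - Im l))"
    using le[of 1] le[of \<i>]
    by (subst emeasure_lborel_box_eq) (auto simp: Basis_prod_def inner_prod_def)
  finally show "emeasure (distr lborel borel (\<lambda>(x, y). Complex x y)) (box l u) = (\<Prod>b\<in>Basis. (u - l) \<bullet> b)"
    by (simp add: Basis_complex_def inner_complex_def)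
qed simp

(* The classical factorisation of a rotation into three shears; it degenerates at the half-turn. *)

lemma mult_unimodular_eq_shears:
  fixes u :: complex
  assumes "norm u = 1" and "Re u \<noteq> -1"
  defines "t \<equiv> Im u / (1 + Re u)"
  shows "(\<lambda>z. u * z) \<circ> (\<lambda>(x, y). Complex x y)
       = (\<lambda>(x, y). Complex x y) \<circ>
           ((\<lambda>(x, y). (x - t * y, y)) \<circ> ((\<lambda>(x, y). (x, y + Im u * x)) \<circ> (\<lambda>(x, y). (x - t * y, y))))"
proof -
  have "(Re u)\<^sup>2 + (Im u)\<^sup>2 = 1"
    using assms(1) unfolding cmod_def by simp
  moreover have t: "t * (1 + Re u) = Im u"
    using assms(2) unfolding t_def by (simp add: field_simps)
  ultimately have ts: "t * Im u = 1 - Re u"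
    using assms(2) by algebra
  have "a - t * b - t * (b + Im u * (a - t * b)) = Re u * a - Im u * b" for a b
  proof -
    have "a - t * b - t * (b + Im u * (a - t * b))
        = (1 - t * Im u) * a - t * (1 + Re u) * b - t * (1 - Re u - t * Im u) * b"
      by (simp add: algebra_simps)
    then show ?thesis
      using t ts by simp
  qed
  moreover have "b + Im u * (a - t * b) = Im u * a + Re u * b" for a b
  proof -
    have "b + Im u * (a - t * b) = Im u * a + (1 - t * Im u) * b"
      by (simp add: algebra_simps)
    then show ?thesis
      using ts by simp
  qed
  ultimately show ?thesis
    by (auto simp: fun_eq_iff complex_eq_iff)
qed

lemma lborel_distr_mult_unimodular:
  fixes u :: complex
  assumes "norm u = 1"
  shows "distr lborel borel (\<lambda>z. u * z) = lborel"
proof -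
  have mult_measurable: "(\<lambda>z. v * z) \<in> borel \<rightarrow>\<^sub>M (borel :: complex measure)"
    "(\<lambda>z. v * z) \<in> lborel \<rightarrow>\<^sub>M (borel :: complex measure)" for v :: complex
    by (simp_all add: borel_measurable_continuous_onI continuous_intros)
  have rotation: "distr lborel borel (\<lambda>z. v * z) = lborel" if "norm v = 1" "Re v \<noteq> -1" for v
  proof -
    define t where "t = Im v / (1 + Re v)"
    let ?C = "\<lambda>(x, y). Complex x y" and ?S = "\<lambda>(x, y). (x - t * y, y)"
      and ?T = "\<lambda>(x, y). (x, y + Im v * x)"
    have C: "?C \<in> borel \<rightarrow>\<^sub>M borel"
      by (simp add: borel_measurable_complex_iff borel_prod[symmetric] case_prod_beta)
    have S: "?S \<in> borel \<rightarrow>\<^sub>M borel"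
      unfolding borel_prod[symmetric] by measurable
    have T: "?T \<in> borel \<rightarrow>\<^sub>M borel"
      unfolding borel_prod[symmetric] by measurable
    note [measurable] = C S T mult_measurable S[folded measurable_lborel1] C[folded measurable_lborel1]
    have shears: "(\<lambda>z. v * z) \<circ> ?C = ?C \<circ> (?S \<circ> (?T \<circ> ?S))"
      using mult_unimodular_eq_shears[OF that] unfolding t_def .
    have "distr lborel borel (\<lambda>z. v * z) = distr (distr lborel borel ?C) borel (\<lambda>z. v * z)"
      by (subst lborel_complex_eq_distr_Complex) (rule refl)
    also have "\<dots> = distr (distr (distr (distr lborel borel ?S) borel ?T) borel ?S) borel ?C"
      by (simp add: distr_distr shears)
    also have "\<dots> = lborel"
      using lborel_pair_distr_shear_fst[of "\<lambda>y. - t * y"] lborel_pair_distr_shear_snd[of "\<lambda>x. Im v * x"]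
      by (simp flip: lborel_complex_eq_distr_Complex)
    finally show ?thesis .
  qed
  show ?thesis
  proof (cases "Re u = -1")
    case True
    then have "u = \<i> * \<i>"
      using assms by (simp add: complex_eq_iff cmod_def power2_eq_square)
    then have "distr lborel borel (\<lambda>z. u * z) = distr (distr lborel borel (\<lambda>z. \<i> * z)) borel (\<lambda>z. \<i> * z)"
      by (simp only: distr_distr[OF mult_measurable(1) mult_measurable(2)])
         (simp add: comp_def mult.assoc)
    then show ?thesis
      by (simp add: rotation)
  qed (use assms rotation in blast)
qed

lemma borel_measurable_cnj [measurable]: "cnj \<in> borel_measurable borel"
  using continuous_on_cnj[OF continuous_on_id] by (rule borel_measurable_continuous_onI)

lemma integral_radial_monomials_orthogonal:
  fixes w :: "real \<Rightarrow> real" and n m :: nat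
  assumes [measurable]: "w \<in> borel_measurable borel" and "n \<noteq> m"
  shows "(\<integral> z. of_real (w (cmod z)) * z ^ n * cnj z ^ m \<partial>lborel) = 0"
proof -
  define F where "F z = of_real (w (cmod z)) * z ^ n * cnj z ^ m" for z :: complex
  define u where "u = cis (pi / (real n - real m))"
  have "u ^ n * cnj u ^ m = cis (real n * (pi / (real n - real m)) + real m * - (pi / (real n - real m)))"
    by (simp only: u_def cis_cnj Complex.DeMoivre cis_mult)
  also have "\<dots> = cis ((real n - real m) * (pi / (real n - real m)))"
    by (simp add: left_diff_distrib diff_divide_distrib)
  also have "\<dots> = -1"
    using \<open>n \<noteq> m\<close> by simp
  finally have "u ^ n * cnj u ^ m = -1" .
  have F_rotate: "F (u * z) = - F z" for z
  proof -
    have "F (u * z) = (u ^ n * cnj u ^ m) * F z"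
      by (simp add: F_def u_def norm_mult power_mult_distrib mult_ac)
    with \<open>u ^ n * cnj u ^ m = -1\<close> show ?thesis
      by simp
  qed
  have [measurable]: "(\<lambda>z. u * z) \<in> lborel \<rightarrow>\<^sub>M borel"
    by (simp add: borel_measurable_continuous_onI continuous_intros)
  have [measurable]: "F \<in> borel_measurable borel"
    unfolding F_def by measurable
  have "(\<integral> z. F z \<partial>lborel) = (\<integral> z. F z \<partial>distr lborel borel (\<lambda>z. u * z))"
    by (simp add: lborel_distr_mult_unimodular u_def)
  also have "\<dots> = - (\<integral> z. F z \<partial>lborel)"
    by (simp add: integral_distr F_rotate)
  finally show ?thesis
    unfolding F_def by simp
qed

lemma integrable_radial_monomials:
  fixes w :: "real \<Rightarrow> real"
  assumes [measurable]: "w \<in> borel_measurable borel"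
    and bounded: "\<And>t. \<bar>w t\<bar> \<le> B" and support: "\<And>t. r \<le> t \<Longrightarrow> w t = 0"
  shows "integrable lborel (\<lambda>z. of_real (w (cmod z)) * z ^ n * cnj z ^ m)"
proof (rule integrableI_bounded_set[where A = "cball (0 :: complex) r" and B = "B * r ^ (n + m)"])
  show "AE z in lborel. z \<in> cball 0 r \<longrightarrow> norm (of_real (w (cmod z)) * z ^ n * cnj z ^ m) \<le> B * r ^ (n + m)"
  proof (intro AE_I2 impI)
    fix z :: complex
    assume "z \<in> cball 0 r"
    then have "cmod z ^ (n + m) \<le> r ^ (n + m)"
      by (intro power_mono) auto
    moreover have "norm (of_real (w (cmod z)) * z ^ n * cnj z ^ m) = \<bar>w (cmod z)\<bar> * cmod z ^ (n + m)"
      by (simp add: norm_mult norm_power power_add)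
    ultimately show "norm (of_real (w (cmod z)) * z ^ n * cnj z ^ m) \<le> B * r ^ (n + m)"
      using bounded[of "cmod z"] order_trans[OF abs_ge_zero bounded] by (simp add: mult_mono)
  qed
  show "emeasure lborel (cball (0 :: complex) r) < \<infinity>"
    by (rule emeasure_bounded_finite) simp
qed (auto simp: support)

lemma power_mult_cnj_power: "z ^ n * cnj z ^ n = of_real (cmod z ^ (2 * n))"
  by (simp add: power_mult power_mult_distrib[symmetric] complex_norm_square[symmetric])

lemma integrable_radial_norm_power:
  fixes w :: "real \<Rightarrow> real"
  assumes "w \<in> borel_measurable borel" and "\<And>t. \<bar>w t\<bar> \<le> B" and "\<And>t. r \<le> t \<Longrightarrow> w t = 0"
  shows "integrable lborel (\<lambda>z. w (cmod z) * cmod z ^ (2 * n))"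
proof -
  have "integrable lborel (\<lambda>z. Re (of_real (w (cmod z)) * z ^ n * cnj z ^ n))"
    by (intro integrable_Re integrable_radial_monomials[OF assms])
  then show ?thesis
    by (simp add: mult.assoc power_mult_cnj_power)
qed

lemma integral_radial_norm_polynomial_square:
  fixes w :: "real \<Rightarrow> real" and b :: "nat \<Rightarrow> complex"
  assumes [measurable]: "w \<in> borel_measurable borel"
    and integrable: "\<And>n m. integrable lborel (\<lambda>z. of_real (w (cmod z)) * z ^ n * cnj z ^ m)"
  shows "(\<integral> z. w (cmod z) * (cmod (\<Sum>n<N. b n * z ^ n))\<^sup>2 \<partial>lborel)
       = (\<Sum>n<N. (cmod (b n))\<^sup>2 * (\<integral> z. w (cmod z) * cmod z ^ (2 * n) \<partial>lborel))"
proof -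
  define K where "K n m = (\<integral> z. of_real (w (cmod z)) * z ^ n * cnj z ^ m \<partial>lborel)" for n m
  have diagonal: "K n n = of_real (\<integral> z. w (cmod z) * cmod z ^ (2 * n) \<partial>lborel)" for n
    by (simp add: K_def mult.assoc power_mult_cnj_power flip: integral_complex_of_real)
  have expand: "of_real (w (cmod z) * (cmod (\<Sum>n<N. b n * z ^ n))\<^sup>2)
      = (\<Sum>n<N. \<Sum>m<N. (b n * cnj (b m)) * (of_real (w (cmod z)) * z ^ n * cnj z ^ m))" for z
  proof -
    have "of_real ((cmod (\<Sum>n<N. b n * z ^ n))\<^sup>2) = (\<Sum>n<N. \<Sum>m<N. (b n * z ^ n) * (cnj (b m) * cnj z ^ m))"
      by (simp only: complex_norm_square sum_product cnj_sum complex_cnj_mult complex_cnj_power)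
    then show ?thesis
      by (simp only: of_real_mult sum_distrib_left) (simp add: mult_ac)
  qed
  have "(of_real (\<integral> z. w (cmod z) * (cmod (\<Sum>n<N. b n * z ^ n))\<^sup>2 \<partial>lborel) :: complex)
      = (\<integral> z. of_real (w (cmod z) * (cmod (\<Sum>n<N. b n * z ^ n))\<^sup>2) \<partial>lborel)"
    by (rule integral_complex_of_real[symmetric])
  also have "\<dots> = (\<Sum>n<N. \<Sum>m<N. (b n * cnj (b m)) * K n m)"
    unfolding expand K_def by (simp add: integrable Bochner_Integration.integral_sum integrable_sum)
  also have "\<dots> = (\<Sum>n<N. (b n * cnj (b n)) * K n n)"
  proof (rule sum.cong[OF refl])
    fix n
    assume "n \<in> {..<N}"
    have "(\<Sum>m<N. (b n * cnj (b m)) * K n m) = (\<Sum>m<N. if m = n then (b n * cnj (b n)) * K n n else 0)"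
      using integral_radial_monomials_orthogonal[of w n] by (intro sum.cong) (auto simp: K_def)
    with \<open>n \<in> {..<N}\<close> show "(\<Sum>m<N. (b n * cnj (b m)) * K n m) = (b n * cnj (b n)) * K n n"
      by simp
  qed
  also have "\<dots> = of_real (\<Sum>n<N. (cmod (b n))\<^sup>2 * (\<integral> z. w (cmod z) * cmod z ^ (2 * n) \<partial>lborel))"
    by (simp add: diagonal flip: complex_norm_square)
  finally show ?thesis
    by (simp only: of_real_eq_iff)
qed

lemma norm_power_series_partial_sum_le:
  fixes b :: "nat \<Rightarrow> complex"
  assumes "summable (\<lambda>n. b n * \<zeta> ^ n)" and "cmod z \<le> r" and "r < cmod \<zeta>"
  shows "cmod (\<Sum>k<N. b k * z ^ k) \<le> (\<Sum>n. cmod (b n) * r ^ n)"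
proof -
  have "0 \<le> r"
    using assms(2) norm_ge_zero order_trans by blast
  have "summable (\<lambda>n. norm (b n * of_real r ^ n))"
    using \<open>0 \<le> r\<close> assms(3) by (intro powser_insidea[OF assms(1)]) simp
  then have summable: "summable (\<lambda>n. cmod (b n) * r ^ n)"
    using \<open>0 \<le> r\<close> by (simp add: norm_mult norm_power)
  have "cmod (\<Sum>k<N. b k * z ^ k) \<le> (\<Sum>k<N. cmod (b k) * r ^ k)"
    using assms(2)
    by (intro order_trans[OF norm_sum] sum_mono) (auto simp: norm_mult norm_power intro!: mult_left_mono power_mono)
  also have "\<dots> \<le> (\<Sum>n. cmod (b n) * r ^ n)"
    using \<open>0 \<le> r\<close> by (intro sum_le_suminf summable) auto
  finally show ?thesis .
qed

lemma radial_weighted_power_series_sums: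
  fixes w :: "real \<Rightarrow> real" and b :: "nat \<Rightarrow> complex" and g :: "complex \<Rightarrow> complex"
  assumes w_measurable [measurable]: "w \<in> borel_measurable borel"
    and bounded: "\<And>t. \<bar>w t\<bar> \<le> B" and support: "\<And>t. r \<le> t \<Longrightarrow> w t = 0" and "r < 1"
    and g: "\<And>z. z \<in> ball 0 1 \<Longrightarrow> (\<lambda>n. b n * z ^ n) sums g z"
  shows "integrable lborel (\<lambda>z. w (cmod z) * (cmod (g z))\<^sup>2)"
    and "(\<lambda>n. (cmod (b n))\<^sup>2 * (\<integral> z. w (cmod z) * cmod z ^ (2 * n) \<partial>lborel))
           sums (\<integral> z. w (cmod z) * (cmod (g z))\<^sup>2 \<partial>lborel)"
proof -
  define S where "S N z = (\<Sum>k<N. b k * z ^ k)" for N z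
  define M where "M = (\<Sum>n. cmod (b n) * r ^ n)"
  define \<rho> where "\<rho> = (1 + max 0 r) / 2"
  have \<rho>: "0 < \<rho>" "\<rho> < 1" "r < \<rho>"
    using \<open>r < 1\<close> unfolding \<rho>_def by auto
  then have "summable (\<lambda>n. b n * of_real \<rho> ^ n)"
    using g[of "of_real \<rho>"] by (auto simp: sums_iff)
  then have S_bound: "cmod (S N z) \<le> M" if "cmod z \<le> r" for N z
    unfolding S_def M_def using that \<rho>
    by (intro norm_power_series_partial_sum_le) auto
  have [measurable]: "S N \<in> borel_measurable borel" for N
    unfolding S_def by measurable
  have tendsto: "(\<lambda>N. w (cmod z) * (cmod (S N z))\<^sup>2) \<longlonglongrightarrow> w (cmod z) * (cmod (g z))\<^sup>2" for z
  proof (cases "z \<in> ball 0 1")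
    case True
    then have "(\<lambda>N. S N z) \<longlonglongrightarrow> g z"
      using g unfolding S_def sums_def by blast
    then show ?thesis
      by (intro tendsto_intros)
  qed (use support \<open>r < 1\<close> in auto)
  have dominated: "norm (w (cmod z) * (cmod (S N z))\<^sup>2) \<le> B * M\<^sup>2 * indicator (cball 0 r) z" for N z
  proof (cases "cmod z \<le> r")
    case True
    then show ?thesis
      using bounded[of "cmod z"] S_bound[OF True, of N] order_trans[OF abs_ge_zero bounded]
      by (simp add: abs_mult mult_mono power_mono)
  qed (simp add: support)
  have bound_integrable: "integrable lborel (\<lambda>z. B * M\<^sup>2 * indicator (cball (0 :: complex) r) z)"
    using emeasure_bounded_finite[of "cball (0 :: complex) r"] by (intro integrable_mult_right) simp
  have "(\<lambda>z. w (cmod z) * (cmod (g z))\<^sup>2) \<in> borel_measurable lborel"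
    "\<And>N. (\<lambda>z. w (cmod z) * (cmod (S N z))\<^sup>2) \<in> borel_measurable lborel"
    by (rule borel_measurable_LIMSEQ_real[OF tendsto], measurable)+
  note convergence = this bound_integrable AE_I2[OF tendsto] AE_I2[OF dominated]
  show "integrable lborel (\<lambda>z. w (cmod z) * (cmod (g z))\<^sup>2)"
    by (rule integrable_dominated_convergence[OF convergence])
  have "(\<lambda>N. \<integral> z. w (cmod z) * (cmod (S N z))\<^sup>2 \<partial>lborel) \<longlonglongrightarrow> (\<integral> z. w (cmod z) * (cmod (g z))\<^sup>2 \<partial>lborel)"
    by (rule integral_dominated_convergence[OF convergence])
  then show "(\<lambda>n. (cmod (b n))\<^sup>2 * (\<integral> z. w (cmod z) * cmod z ^ (2 * n) \<partial>lborel))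
      sums (\<integral> z. w (cmod z) * (cmod (g z))\<^sup>2 \<partial>lborel)"
    unfolding sums_def S_def
    by (simp only: integral_radial_norm_polynomial_square[OF w_measurable
          integrable_radial_monomials[OF w_measurable bounded support]])
qed

lemma indicator_ball_radius_Suc_le:
  "(indicator (ball 0 (1 - 1 / real (Suc k))) z :: ennreal)
     \<le> indicator (ball (0 :: 'a :: real_normed_vector) (1 - 1 / real (Suc (Suc k)))) z"
proof -
  have "1 - 1 / real (Suc k) \<le> 1 - 1 / real (Suc (Suc k))"
    by (intro diff_mono order_refl divide_left_mono) auto
  then show ?thesis
    by (auto simp: indicator_def)
qed

lemma nn_integral_unit_ball_SUP:
  fixes F :: "'a::real_normed_vector \<Rightarrow> ennreal"
  assumes "\<And>k. (\<lambda>z. F z * indicator (ball 0 (1 - 1 / real (Suc k))) z) \<in> borel_measurable M"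
  shows "(\<integral>\<^sup>+ z\<in>ball 0 1. F z \<partial>M) = (SUP k. \<integral>\<^sup>+ z\<in>ball 0 (1 - 1 / real (Suc k)). F z \<partial>M)"
proof -
  have incseq: "incseq (\<lambda>k z. F z * indicator (ball 0 (1 - 1 / real (Suc k))) z)"
    by (intro incseq_SucI le_funI mult_left_mono indicator_ball_radius_Suc_le) simp
  have "(SUP k. F z * indicator (ball 0 (1 - 1 / real (Suc k))) z) = F z * indicator (ball 0 1) z" for z
  proof (cases "norm z < 1")
    case True
    have "(\<lambda>k. 1 - 1 / real (Suc k)) \<longlonglongrightarrow> 1 - 0"
      using LIMSEQ_inverse_real_of_nat by (intro tendsto_diff tendsto_const) (simp add: inverse_eq_divide)
    from order_tendstoD(1)[OF this[simplified] True] obtain k where "norm z < 1 - 1 / real (Suc k)"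
      by (auto simp: eventually_sequentially)
    with True show ?thesis
      by (intro antisym SUP_least SUP_upper2[of k]) (auto simp: indicator_def)
  next
    case False
    then have "norm z \<notin> {..<1 - 1 / real (Suc k)}" for k
      by (simp add: not_less order_trans[OF _ False[unfolded not_less]])
    with False show ?thesis
      by (simp add: indicator_def)
  qed
  then show ?thesis
    using nn_integral_monotone_convergence_SUP[OF incseq assms] by simp
qed

lemma nn_integral_ball_radial_power_series:
  fixes w :: "real \<Rightarrow> real" and b :: "nat \<Rightarrow> complex" and g :: "complex \<Rightarrow> complex"
  assumes [measurable]: "w \<in> borel_measurable borel"
    and w: "\<And>t. 0 \<le> t \<Longrightarrow> t < 1 \<Longrightarrow> 0 \<le> w t \<and> w t \<le> B" and "r < 1"
    and g: "\<And>z. z \<in> ball 0 1 \<Longrightarrow> (\<lambda>n. b n * z ^ n) sums g z"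
  shows "(\<lambda>z. ennreal (w (cmod z) * (cmod (g z))\<^sup>2) * indicator (ball 0 r) z) \<in> borel_measurable borel"
    and "(\<integral>\<^sup>+ z\<in>ball 0 r. ennreal (w (cmod z) * (cmod (g z))\<^sup>2) \<partial>lborel)
       = (\<Sum>n. ennreal ((cmod (b n))\<^sup>2) * (\<integral>\<^sup>+ z\<in>ball 0 r. ennreal (w (cmod z) * cmod z ^ (2 * n)) \<partial>lborel))"
proof -
  define v where "v t = indicator {0..<r} t * w t" for t
  have v_measurable [measurable]: "v \<in> borel_measurable borel"
    unfolding v_def by measurable
  have v_nonneg: "0 \<le> v t" for t
    using w[of t] \<open>r < 1\<close> by (simp add: v_def indicator_def)
  have v_bounded: "\<bar>v t\<bar> \<le> B" for t
    using w[of t] w[of 0] \<open>r < 1\<close> by (auto simp: v_def indicator_def)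
  have v_support: "r \<le> t \<Longrightarrow> v t = 0" for t
    by (simp add: v_def)
  have restrict: "ennreal (w (cmod z) * h z) * indicator (ball 0 r) z = ennreal (v (cmod z) * h z)" for h z
    by (simp add: v_def indicator_def)
  then have restrict_integral: "(\<integral>\<^sup>+ z\<in>ball 0 r. ennreal (w (cmod z) * h z) \<partial>lborel)
      = (\<integral>\<^sup>+ z. ennreal (v (cmod z) * h z) \<partial>lborel)" for h
    by (intro nn_integral_cong)
  note series = radial_weighted_power_series_sums[OF v_measurable v_bounded v_support \<open>r < 1\<close> g]
  have moment: "ennreal (\<integral> z. v (cmod z) * cmod z ^ (2 * n) \<partial>lborel)
      = (\<integral>\<^sup>+ z\<in>ball 0 r. ennreal (w (cmod z) * cmod z ^ (2 * n)) \<partial>lborel)" for n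
    using integrable_radial_norm_power[OF v_measurable v_bounded v_support] v_nonneg
    by (simp add: restrict_integral nn_integral_eq_integral)
  show "(\<lambda>z. ennreal (w (cmod z) * (cmod (g z))\<^sup>2) * indicator (ball 0 r) z) \<in> borel_measurable borel"
  proof -
    have "(\<lambda>z. ennreal (w (cmod z) * (cmod (g z))\<^sup>2) * indicator (ball 0 r) z)
        = (\<lambda>z. ennreal (v (cmod z) * (cmod (g z))\<^sup>2))"
      by (intro ext restrict)
    then show ?thesis
      using borel_measurable_integrable[OF series(1)] by simp
  qed
  have "(\<integral>\<^sup>+ z\<in>ball 0 r. ennreal (w (cmod z) * (cmod (g z))\<^sup>2) \<partial>lborel)
      = ennreal (\<integral> z. v (cmod z) * (cmod (g z))\<^sup>2 \<partial>lborel)"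
    using series(1) v_nonneg by (simp add: restrict_integral nn_integral_eq_integral)
  also have "\<dots> = (\<Sum>n. ennreal ((cmod (b n))\<^sup>2 * (\<integral> z. v (cmod z) * cmod z ^ (2 * n) \<partial>lborel)))"
  proof -
    have "0 \<le> (cmod (b n))\<^sup>2 * (\<integral> z. v (cmod z) * cmod z ^ (2 * n) \<partial>lborel)" for n
      using v_nonneg by (intro mult_nonneg_nonneg integral_nonneg) auto
    then show ?thesis
      using series(2) by (simp add: sums_iff suminf_ennreal2)
  qed
  also have "\<dots> = (\<Sum>n. ennreal ((cmod (b n))\<^sup>2) * (\<integral>\<^sup>+ z\<in>ball 0 r. ennreal (w (cmod z) * cmod z ^ (2 * n)) \<partial>lborel))"
    using v_nonneg by (simp add: ennreal_mult integral_nonneg flip: moment)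
  finally show "(\<integral>\<^sup>+ z\<in>ball 0 r. ennreal (w (cmod z) * (cmod (g z))\<^sup>2) \<partial>lborel)
       = (\<Sum>n. ennreal ((cmod (b n))\<^sup>2) * (\<integral>\<^sup>+ z\<in>ball 0 r. ennreal (w (cmod z) * cmod z ^ (2 * n)) \<partial>lborel))" .
qed

lemma nn_integral_disc_radial_power_series:
  fixes w :: "real \<Rightarrow> real" and b :: "nat \<Rightarrow> complex" and g :: "complex \<Rightarrow> complex"
  assumes w_measurable: "w \<in> borel_measurable borel"
    and w_bounds: "\<And>t. 0 \<le> t \<Longrightarrow> t < 1 \<Longrightarrow> 0 \<le> w t \<and> w t \<le> B"
    and g: "\<And>z. z \<in> ball 0 1 \<Longrightarrow> (\<lambda>n. b n * z ^ n) sums g z"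
  shows "(\<integral>\<^sup>+ z\<in>ball 0 1. ennreal (w (cmod z) * (cmod (g z))\<^sup>2) \<partial>lborel)
       = (\<Sum>n. ennreal ((cmod (b n))\<^sup>2) * (\<integral>\<^sup>+ z\<in>ball 0 1. ennreal (w (cmod z) * cmod z ^ (2 * n)) \<partial>lborel))"
proof -
  define J where "J n k = (\<integral>\<^sup>+ z\<in>ball 0 (1 - 1 / real (Suc k)). ennreal (w (cmod z) * cmod z ^ (2 * n)) \<partial>lborel)" for n k
  note on_ball = nn_integral_ball_radial_power_series[OF w_measurable w_bounds _ g]
  have monomials: "(\<lambda>z. ennreal (w (cmod z) * cmod z ^ (2 * n)) * indicator (ball 0 r) z) \<in> borel_measurable borel"
    for n and r :: real
    using w_measurable borel_open[OF open_ball, of "0 :: complex" r] by measurable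
  have "incseq (J n)" for n
    unfolding J_def
    by (intro incseq_SucI nn_integral_mono mult_left_mono indicator_ball_radius_Suc_le) simp
  then have incseq: "incseq (\<lambda>k. ennreal ((cmod (b n))\<^sup>2) * J n k)" for n
    by (auto simp: incseq_def intro: mult_left_mono)
  have "(\<integral>\<^sup>+ z\<in>ball 0 1. ennreal (w (cmod z) * (cmod (g z))\<^sup>2) \<partial>lborel)
      = (SUP k. \<integral>\<^sup>+ z\<in>ball 0 (1 - 1 / real (Suc k)). ennreal (w (cmod z) * (cmod (g z))\<^sup>2) \<partial>lborel)"
    using on_ball(1) by (intro nn_integral_unit_ball_SUP) simp
  also have "\<dots> = (SUP k. \<Sum>n. ennreal ((cmod (b n))\<^sup>2) * J n k)"
    unfolding J_def using on_ball(2) by simp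
  also have "\<dots> = (\<Sum>n. SUP k. ennreal ((cmod (b n))\<^sup>2) * J n k)"
    by (rule ennreal_suminf_SUP_eq[OF incseq, symmetric])
  also have "\<dots> = (\<Sum>n. ennreal ((cmod (b n))\<^sup>2) * (SUP k. J n k))"
    by (simp add: SUP_mult_left_ennreal)
  also have "\<dots> = (\<Sum>n. ennreal ((cmod (b n))\<^sup>2) * (\<integral>\<^sup>+ z\<in>ball 0 1. ennreal (w (cmod z) * cmod z ^ (2 * n)) \<partial>lborel))"
    unfolding J_def using monomials by (simp add: nn_integral_unit_ball_SUP)
  finally show ?thesis .
qed

lemma emeasure_ball_inter_norm_greater:
  assumes "0 \<le> R"
  shows "emeasure lborel (ball (0 :: complex) R \<inter> {z. x < cmod z}) = ennreal (pi * R\<^sup>2 - pi * (max 0 (min x R))\<^sup>2)"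
proof (cases "R \<le> max 0 x")
  case True
  then have "ball (0 :: complex) R \<inter> {z. x < cmod z} = {}"
  proof -
    have False if "cmod z < R" "x < cmod z" for z :: complex
      using True that norm_ge_zero[of z] by (auto simp: le_max_iff_disj)
    then show ?thesis
      by auto
  qed
  moreover have "max 0 (min x R) = R"
    using True assms by auto
  ultimately show ?thesis
    by simp
next
  case False
  define q where "q = max 0 x"
  have q: "0 \<le> q" "q < R" "max 0 (min x R) = q"
    using False assms by (auto simp: q_def)
  have "AE z in lborel. z \<in> ball 0 R \<inter> {z. x < cmod z} \<longleftrightarrow> z \<in> ball 0 R - cball (0 :: complex) q"
    using AE_lborel_singleton[of "0 :: complex"] by eventually_elim (auto simp: q_def le_max_iff_disj)
  then have "emeasure lborel (ball (0 :: complex) R \<inter> {z. x < cmod z}) = emeasure lborel (ball 0 R - cball (0 :: complex) q)"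
    by (intro emeasure_eq_AE) auto
  also have "\<dots> = ennreal (pi * R\<^sup>2) - ennreal (pi * q\<^sup>2)"
    using q by (subst emeasure_Diff) (auto simp: emeasure_ball emeasure_cball unit_ball_vol_2)
  also have "\<dots> = ennreal (pi * R\<^sup>2 - pi * (max 0 (min x R))\<^sup>2)"
    using q by (simp add: ennreal_minus)
  finally show ?thesis .
qed

lemma nn_integral_radial_density_greater:
  assumes "0 \<le> R"
  shows "(\<integral>\<^sup>+ t. ennreal (2 * pi * t) * indicator {0..R} t * indicator {x<..} t \<partial>lborel)
       = ennreal (pi * R\<^sup>2 - pi * (max 0 (min x R))\<^sup>2)"
proof -
  define q where "q = max 0 (min x R)"
  have q: "0 \<le> q" "q \<le> R"
    using assms by (auto simp: q_def)
  have "AE t in lborel. ennreal (2 * pi * t) * indicator {0..R} t * indicator {x<..} t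
      = ennreal (2 * pi * t) * indicator {q..R} t"
    using AE_lborel_singleton[of q] by eventually_elim (auto simp: q_def indicator_def)
  then have "(\<integral>\<^sup>+ t. ennreal (2 * pi * t) * indicator {0..R} t * indicator {x<..} t \<partial>lborel)
      = (\<integral>\<^sup>+ t. ennreal (2 * pi * t) * indicator {q..R} t \<partial>lborel)"
    by (rule nn_integral_cong_AE)
  also have "\<dots> = ennreal (pi * R\<^sup>2 - pi * q\<^sup>2)"
    using q by (intro nn_integral_FTC_Icc[where F = "\<lambda>t. pi * t\<^sup>2"])
      (auto intro!: derivative_eq_intros simp: power2_eq_square)
  finally show ?thesis
    by (simp add: q_def)
qed

lemma distr_norm_ball:
  assumes "0 \<le> R"
  shows "distr (density lborel (indicator (ball (0 :: complex) R))) borel cmod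
       = density lborel (\<lambda>t. ennreal (2 * pi * t) * indicator {0..R} t)"
proof (rule measure_eqI_lessThan)
  fix x :: real
  have "emeasure (distr (density lborel (indicator (ball (0 :: complex) R))) borel cmod) {x<..}
      = emeasure lborel (ball (0 :: complex) R \<inter> {z. x < cmod z})"
    by (subst emeasure_distr) (auto simp: emeasure_density_const indicator_inter_arith[symmetric]
        simp flip: emeasure_restricted intro!: arg_cong2[where f = emeasure])
  then show "emeasure (distr (density lborel (indicator (ball (0 :: complex) R))) borel cmod) {x<..} < \<infinity>"
    and "emeasure (distr (density lborel (indicator (ball (0 :: complex) R))) borel cmod) {x<..}
       = emeasure (density lborel (\<lambda>t. ennreal (2 * pi * t) * indicator {0..R} t)) {x<..}"
    using assms
    by (simp_all add: emeasure_ball_inter_norm_greater emeasure_density nn_integral_radial_density_greater)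
qed simp_all

lemma nn_integral_ball_radial:
  fixes G :: "real \<Rightarrow> ennreal"
  assumes [measurable]: "G \<in> borel_measurable borel" and "0 \<le> R"
  shows "(\<integral>\<^sup>+ z\<in>ball (0 :: complex) R. G (cmod z) \<partial>lborel) = (\<integral>\<^sup>+ t\<in>{0..R}. ennreal (2 * pi * t) * G t \<partial>lborel)"
proof -
  have "(\<integral>\<^sup>+ z\<in>ball (0 :: complex) R. G (cmod z) \<partial>lborel)
      = (\<integral>\<^sup>+ z. G (cmod z) \<partial>density lborel (indicator (ball (0 :: complex) R)))"
    by (subst nn_integral_density) (auto simp: mult.commute intro: borel_measurable_indicator)
  also have "\<dots> = (\<integral>\<^sup>+ t. G t \<partial>distr (density lborel (indicator (ball (0 :: complex) R))) borel cmod)"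
    by (simp add: nn_integral_distr)
  also have "\<dots> = (\<integral>\<^sup>+ t\<in>{0..R}. ennreal (2 * pi * t) * G t \<partial>lborel)"
    using assms(2) by (simp add: distr_norm_ball nn_integral_density mult_ac)
  finally show ?thesis .
qed

lemma has_real_derivative_power_Suc_div:
  "((\<lambda>t. t ^ Suc k / real (Suc k)) has_real_derivative x ^ k) (at x)"
  using DERIV_cdivide[OF DERIV_pow[of "Suc k" x], of "real (Suc k)"] by simp

lemma nn_integral_unit_disc_norm_power:
  "(\<integral>\<^sup>+ z\<in>ball 0 1. ennreal (cmod z ^ (2 * n)) \<partial>lborel) = ennreal (pi / (real n + 1))"
proof -
  have "(\<integral>\<^sup>+ z\<in>ball 0 1. ennreal (cmod z ^ (2 * n)) \<partial>lborel)
      = (\<integral>\<^sup>+ t\<in>{0..1}. ennreal (2 * pi * t) * ennreal (t ^ (2 * n)) \<partial>lborel)"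
    by (rule nn_integral_ball_radial) simp_all
  also have "\<dots> = (\<integral>\<^sup>+ t. ennreal (2 * pi * t ^ (2 * n + 1)) * indicator {0..1} t \<partial>lborel)"
    by (intro nn_integral_cong) (simp add: ennreal_mult[symmetric] indicator_def mult_ac)
  also have "\<dots> = ennreal (2 * pi * (1 ^ Suc (2 * n + 1) / real (Suc (2 * n + 1)))
      - 2 * pi * (0 ^ Suc (2 * n + 1) / real (Suc (2 * n + 1))))"
    by (intro nn_integral_FTC_Icc DERIV_cmult has_real_derivative_power_Suc_div) auto
  also have "\<dots> = ennreal (pi / (real n + 1))"
    by (simp add: field_simps)
  finally show ?thesis .
qed

lemma nn_integral_unit_disc_weighted_norm_power:
  "(\<integral>\<^sup>+ z\<in>ball 0 1. ennreal ((1 - cmod z)\<^sup>2 * cmod z ^ (2 * n)) \<partial>lborel)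
     = ennreal (pi / ((real n + 1) * (2 * real n + 3) * (real n + 2)))"
proof -
  define P where "P k t = t ^ Suc k / real (Suc k)" for k and t :: real
  define F where "F t = 2 * pi * (P (2 * n + 1) t - 2 * P (2 * n + 2) t + P (2 * n + 3) t)" for t
  have polynomial: "2 * pi * t * ((1 - t)\<^sup>2 * t ^ (2 * n)) = 2 * pi * (t ^ (2 * n + 1) - 2 * t ^ (2 * n + 2) + t ^ (2 * n + 3))"
    for t :: real
    by (simp add: power2_eq_square power3_eq_cube power_add algebra_simps)
  have "(\<integral>\<^sup>+ z\<in>ball 0 1. ennreal ((1 - cmod z)\<^sup>2 * cmod z ^ (2 * n)) \<partial>lborel)
      = (\<integral>\<^sup>+ t\<in>{0..1}. ennreal (2 * pi * t) * ennreal ((1 - t)\<^sup>2 * t ^ (2 * n)) \<partial>lborel)"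
    by (rule nn_integral_ball_radial) simp_all
  also have "\<dots> = (\<integral>\<^sup>+ t. ennreal (2 * pi * t * ((1 - t)\<^sup>2 * t ^ (2 * n))) * indicator {0..1} t \<partial>lborel)"
    by (intro nn_integral_cong) (simp add: ennreal_mult[symmetric] indicator_def)
  also have "\<dots> = (\<integral>\<^sup>+ t. ennreal (2 * pi * (t ^ (2 * n + 1) - 2 * t ^ (2 * n + 2) + t ^ (2 * n + 3)))
      * indicator {0..1} t \<partial>lborel)"
    by (simp only: polynomial)
  also have "\<dots> = ennreal (F 1 - F 0)"
  proof (rule nn_integral_FTC_Icc)
    show "(F has_real_derivative 2 * pi * (x ^ (2 * n + 1) - 2 * x ^ (2 * n + 2) + x ^ (2 * n + 3))) (at x)" for x
      unfolding F_def P_def by (intro DERIV_cmult DERIV_add DERIV_diff has_real_derivative_power_Suc_div)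
    show "0 \<le> 2 * pi * (x ^ (2 * n + 1) - 2 * x ^ (2 * n + 2) + x ^ (2 * n + 3))" if "x \<in> {0..1}" for x
      unfolding polynomial[symmetric] using that by simp
  qed simp_all
  also have "F 1 - F 0 = 2 * pi * (1 / (2 + 2 * real n) - 2 / (3 + 2 * real n) + 1 / (4 + 2 * real n))"
    by (simp add: F_def P_def zero_power)
  also have "\<dots> = pi / ((real n + 1) * (2 * real n + 3) * (real n + 2))"
    by (simp add: divide_simps) (simp add: algebra_simps)
  finally show ?thesis .
qed

lemma holomorphic_deriv_power_series:
  assumes "f holomorphic_on ball 0 r" and "z \<in> ball 0 r"
  shows "(\<lambda>n. (of_nat (Suc n) * ((deriv ^^ Suc n) f 0 / fact (Suc n))) * z ^ n) sums deriv f z"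
proof -
  have "(deriv ^^ Suc n) f 0 / fact (Suc n) = (deriv ^^ n) (deriv f) 0 / (of_nat (Suc n) * fact n)" for n
    by (simp only: funpow_Suc_right o_def fact_Suc of_nat_mult)
  then have "of_nat (Suc n) * ((deriv ^^ Suc n) f 0 / fact (Suc n)) = (deriv ^^ n) (deriv f) 0 / fact n" for n
    by (simp del: of_nat_Suc)
  then show ?thesis
    using holomorphic_power_series[OF holomorphic_deriv[OF assms(1) open_ball] assms(2)] by simp
qed

lemma derivative_coefficient_moment_le:
  fixes c :: complex
  shows "ennreal ((cmod (of_nat (Suc n) * c))\<^sup>2) * ennreal (pi / ((real n + 1) * (2 * real n + 3) * (real n + 2)))
    \<le> ennreal (1 / 2) * (ennreal ((cmod c)\<^sup>2) * ennreal (pi / (real (Suc n) + 1)))"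
proof -
  have "(real n + 1)\<^sup>2 * (pi / ((real n + 1) * (2 * real n + 3) * (real n + 2))) \<le> 1 / 2 * (pi / (real n + 2))"
    by (simp add: divide_simps power2_eq_square) (simp add: algebra_simps)
  then have "(cmod c)\<^sup>2 * ((real n + 1)\<^sup>2 * (pi / ((real n + 1) * (2 * real n + 3) * (real n + 2))))
      \<le> (cmod c)\<^sup>2 * (1 / 2 * (pi / (real n + 2)))"
    by (rule mult_left_mono) simp
  moreover have "cmod (of_nat (Suc n) * c) = (real n + 1) * cmod c"
    unfolding norm_mult norm_of_nat by simp
  moreover have "real (Suc n) + 1 = real n + 2"
    by simp
  ultimately have "(cmod (of_nat (Suc n) * c))\<^sup>2 * (pi / ((real n + 1) * (2 * real n + 3) * (real n + 2)))
      \<le> 1 / 2 * ((cmod c)\<^sup>2 * (pi / (real (Suc n) + 1)))"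
    by (simp only: power_mult_distrib mult_ac)
  then have "ennreal ((cmod (of_nat (Suc n) * c))\<^sup>2 * (pi / ((real n + 1) * (2 * real n + 3) * (real n + 2))))
      \<le> ennreal (1 / 2 * ((cmod c)\<^sup>2 * (pi / (real (Suc n) + 1))))"
    by (rule ennreal_leI)
  then show ?thesis
    by (simp only: ennreal_mult divide_nonneg_nonneg mult_nonneg_nonneg zero_le_power2 pi_ge_zero
        of_nat_0_le_iff add_nonneg_nonneg zero_le_one zero_le_numeral)
qed

theorem lemmaB1:
  fixes f :: "complex \<Rightarrow> complex"
  assumes "f holomorphic_on ball 0 1"
    and "(\<integral>\<^sup>+ z \<in> ball 0 1. ennreal ((cmod (f z))\<^sup>2) \<partial>lborel) < \<infinity>"
  shows "(\<integral>\<^sup>+ z \<in> ball 0 1. ennreal ((1 - cmod z)\<^sup>2 * (cmod (deriv f z))\<^sup>2) \<partial>lborel)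
           \<le> ennreal (1/2) * (\<integral>\<^sup>+ z \<in> ball 0 1. ennreal ((cmod (f z))\<^sup>2) \<partial>lborel)"
proof -
  define a where "a n = (deriv ^^ n) f 0 / fact n" for n
  define c where "c n = ennreal ((cmod (a n))\<^sup>2) * ennreal (pi / (real n + 1))" for n
  have "(\<integral>\<^sup>+ z \<in> ball 0 1. ennreal ((1 - cmod z)\<^sup>2 * (cmod (deriv f z))\<^sup>2) \<partial>lborel)
      = (\<Sum>n. ennreal ((cmod (of_nat (Suc n) * a (Suc n)))\<^sup>2)
           * ennreal (pi / ((real n + 1) * (2 * real n + 3) * (real n + 2))))"
    using nn_integral_disc_radial_power_series[where w = "\<lambda>t. (1 - t)\<^sup>2" and B = 1]
      holomorphic_deriv_power_series[OF assms(1)]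
    by (simp add: a_def power_le_one nn_integral_unit_disc_weighted_norm_power)
  also have "\<dots> \<le> (\<Sum>n. ennreal (1 / 2) * c (Suc n))"
    unfolding c_def by (intro suminf_le derivative_coefficient_moment_le) auto
  also have "\<dots> \<le> ennreal (1 / 2) * (\<Sum>n. c n)"
    using suminf_offset[of c 1] by (simp add: mult_left_mono)
  also have "(\<Sum>n. c n) = (\<integral>\<^sup>+ z \<in> ball 0 1. ennreal ((cmod (f z))\<^sup>2) \<partial>lborel)"
    using nn_integral_disc_radial_power_series[where w = "\<lambda>_. 1" and B = 1 and b = a and g = f]
      holomorphic_power_series[OF assms(1)]
    by (simp add: a_def c_def nn_integral_unit_disc_norm_power)
  finally show ?thesis .
qed

end
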